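(* Let $\delta\in[0,1]$, $m$ an order function on $\mathbb R^d\times\mathbb T^d$ and $a\in S^0_\delta(m)(\mathbb R^d\times\mathbb T^d)$. Then for fixed $\varepsilon>0$ the operator $\mathrm{Op}^{\mathbb T}_\varepsilon(a)$ is continuous from $s((\varepsilon\mathbb Z)^d)$ to $s((\varepsilon\mathbb Z)^d)$.
   Context: $\mathbb T^d=\mathbb R^d/2\pi\mathbb Z^d$; functions on $\mathbb T^d$ are identified with $2\pi$-periodic functions on $\mathbb R^d$. An order function is $m:\mathbb R^d\times\mathbb T^d\to[0,\infty)$ with $m(x,\xi)\le C_0\langle x-y\rangle^{N_1}m(y,\eta)$ for all $x,y,\xi,\eta$, where $\langle x\rangle=\sqrt{1+|x|^2}$. $S^k_\delta(m)(\mathbb R^d\times\mathbb T^d)$ is the set of smooth functions $a(x,\xi;\varepsilon)$ on $\mathbb R^d\times\mathbb T^d\times(0,1]$ such that $|\partial^\alpha_x\partial^\beta_\xi a|\le C_{\alpha\beta}m(x,\xi)\varepsilon^{k-\delta(|\alpha|+|\beta|)}$ for all $\alpha,\beta$. $\mathrm{Op}^{\mathbb T}_\varepsilon(a)v(x)=(2\pi)^{-d}\sum_{y\in(\varepsilon\mathbb Z)^d}\int_{[-\pi,\pi]^d}e^{i(y-x)\cdot\xi/\varepsilon}a(x,\xi;\varepsilon)v(y)\,d\xi$. $s((\varepsilon\mathbb Z)^d)$ is the space of $u:(\varepsilon\mathbb Z)^d\to\mathbb C$ with $\|u\|_\alpha:=\sup_x|x^\alpha u(x)|<\infty$ for all $\alpha\in\mathbb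 N^d$, with the Fréchet topology of these seminorms. *)

theory Defs
  imports "HOL-Analysis.Analysis"
begin

fun dd :: "'a::real_normed_vector list \<Rightarrow> ('a \<Rightarrow> 'b::real_normed_vector) \<Rightarrow> 'a \<Rightarrow> 'b" where
  "dd [] f = f"
| "dd (v # vs) f = (\<lambda>z. frechet_derivative (dd vs f) (at z) v)"

definition smooth_fun :: "('a::euclidean_space \<Rightarrow> 'b::real_normed_vector) \<Rightarrow> bool" where
  "smooth_fun f \<longleftrightarrow> (\<forall>vs. set vs \<subseteq> Basis \<longrightarrow> (\<forall>z. dd vs f differentiable (at z)))"

definition jbr :: "real^'n \<Rightarrow> real" where
  "jbr x = sqrt (1 + (norm x)\<^sup>2)"

text \<open>Functions on R^d x T^d: 2 pi periodic in every coordinate of the second variable.\<close>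
definition periodic_xi :: "(real^'n \<Rightarrow> real^'n \<Rightarrow> 'b) \<Rightarrow> bool" where
  "periodic_xi f \<longleftrightarrow> (\<forall>j x \<xi>. f x (\<xi> + axis j (2 * pi)) = f x \<xi>)"

definition order_function :: "(real^'n \<Rightarrow> real^'n \<Rightarrow> real) \<Rightarrow> bool" where
  "order_function m \<longleftrightarrow> periodic_xi m \<and> (\<forall>x \<xi>. 0 \<le> m x \<xi>) \<and>
     (\<exists>C0 N1. \<forall>x y \<xi> \<eta>. m x \<xi> \<le> C0 * jbr (x - y) powr N1 * m y \<eta>)"

text \<open>Symbol class S^k_delta(m)(R^d x T^d); symbols a x xi eps with eps in (0,1].
  Derivatives are taken in the joint variable (x, xi); a list of coordinate directions of length
  |alpha|+|beta| corresponds to the multi-index derivative.\<close>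
definition symbol_class :: "real \<Rightarrow> real \<Rightarrow> (real^'n \<Rightarrow> real^'n \<Rightarrow> real)
    \<Rightarrow> (real^'n \<Rightarrow> real^'n \<Rightarrow> real \<Rightarrow> complex) \<Rightarrow> bool" where
  "symbol_class k \<delta> m a \<longleftrightarrow>
     (\<forall>\<epsilon>\<in>{0<..1}. periodic_xi (\<lambda>x \<xi>. a x \<xi> \<epsilon>) \<and> smooth_fun (\<lambda>z. a (fst z) (snd z) \<epsilon>)) \<and>
     (\<forall>vs. set vs \<subseteq> Basis \<longrightarrow>
        (\<exists>C. \<forall>\<epsilon>\<in>{0<..1}. \<forall>x \<xi>.
           norm (dd vs (\<lambda>z. a (fst z) (snd z) \<epsilon>) (x, \<xi>))
             \<le> C * m x \<xi> * \<epsilon> powr (k - \<delta> * real (length vs))))"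

text \<open>The lattice (eps Z)^d, parametrised by Z^d: k \<mapsto> eps k.\<close>
definition lat :: "real \<Rightarrow> int^'n \<Rightarrow> real^'n" where
  "lat \<epsilon> k = (\<chi> i. \<epsilon> * of_int (k $ i))"

definition OpT :: "real \<Rightarrow> (real^'n \<Rightarrow> real^'n \<Rightarrow> real \<Rightarrow> complex)
    \<Rightarrow> (int^'n \<Rightarrow> complex) \<Rightarrow> int^'n \<Rightarrow> complex" where
  "OpT \<epsilon> a v k = complex_of_real (1 / (2 * pi) ^ CARD('n)) *
     (\<Sum>\<^sub>\<infinity>l\<in>UNIV. integral (cbox (\<chi> i. - pi) (\<chi> i. pi))
        (\<lambda>\<xi>. exp (\<i> * complex_of_real (((lat \<epsilon> l - lat \<epsilon> k) \<bullet> \<xi>) / \<epsilon>)) * a (lat \<epsilon> k) \<xi> \<epsilon> * v l))"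

definition wmon :: "real \<Rightarrow> ('n::finite \<Rightarrow> nat) \<Rightarrow> (int^'n \<Rightarrow> complex) \<Rightarrow> int^'n \<Rightarrow> real" where
  "wmon \<epsilon> \<alpha> u k = norm (complex_of_real (\<Prod>i\<in>UNIV. (lat \<epsilon> k $ i) ^ \<alpha> i) * u k)"

definition seminorm_s :: "real \<Rightarrow> ('n::finite \<Rightarrow> nat) \<Rightarrow> (int^'n \<Rightarrow> complex) \<Rightarrow> real" where
  "seminorm_s \<epsilon> \<alpha> u = (SUP k. wmon \<epsilon> \<alpha> u k)"

definition s_space :: "real \<Rightarrow> (int^'n::finite \<Rightarrow> complex) set" where
  "s_space \<epsilon> = {u. \<forall>\<alpha>. bdd_above (range (wmon \<epsilon> \<alpha> u))}"

definition s_topology :: "real \<Rightarrow> (int^'n::finite \<Rightarrow> complex) topology" where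
  "s_topology \<epsilon> = topology (\<lambda>U. U \<subseteq> s_space \<epsilon> \<and>
     (\<forall>u\<in>U. \<exists>F r. finite F \<and> r > 0 \<and>
        {v \<in> s_space \<epsilon>. \<forall>\<alpha>\<in>F. seminorm_s \<epsilon> \<alpha> (v - u) < r} \<subseteq> U))"

end

theory Submission
  imports Defs
begin

(* OpT eps a is the lattice operator with kernel
     K(k,l) = (2 pi)^(-d) * integral over one period cell of exp(i (l - k).xi) a(eps k, xi) dxi.
   Instead of integrating by parts we use the half-period trick: translating xi_i by
   pi/|l_i - k_i| flips the sign of the exponential, so the integral only sees the finite
   difference (a(xi) - a(xi + pi/|l_i - k_i| e_i))/2, and M iterations together with the mean
   value theorem give |l_i - k_i|^M |K(k,l)| <= C <eps k>^N1.  Thus K decays faster than any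
   power of the weight W(l - k) = prod_i (1 + |l_i - k_i|) and grows only polynomially in k.
   Peetre's inequality W(k) <= W(k - l) W(l) and the summability of W(l)^(-2) then dominate
   every seminorm of Op(a) v by finitely many seminorms of v.  For fixed eps the loss
   eps^(-delta M) in the symbol estimates is just a constant. *)

definition smooth_along :: "'a::real_normed_vector \<Rightarrow> ('a \<Rightarrow> 'b::real_normed_vector) \<Rightarrow> bool" where
  "smooth_along w G \<longleftrightarrow> (\<forall>j z. dd (replicate j w) G differentiable (at z))"

lemma smooth_along_differentiable: "smooth_along w G \<Longrightarrow> G differentiable (at z)"
  unfolding smooth_along_def by (metis dd.simps(1) replicate_0)

lemma smooth_along_continuous_on: "smooth_along w G \<Longrightarrow> continuous_on S G"
  by (meson continuous_at_imp_continuous_on differentiable_imp_continuous_within smooth_along_differentiable)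

definition halfdiff :: "real \<Rightarrow> 'a::real_normed_vector \<Rightarrow> ('a \<Rightarrow> 'b::real_normed_vector) \<Rightarrow> 'a \<Rightarrow> 'b" where
  "halfdiff h w G z = (1/2) *\<^sub>R (G z - G (z + h *\<^sub>R w))"

lemma has_derivative_halfdiff:
  assumes "(G has_derivative G1) (at z)" "(G has_derivative G2) (at (z + h *\<^sub>R w))"
  shows "(halfdiff h w G has_derivative (\<lambda>v. (1/2) *\<^sub>R (G1 v - G2 v))) (at z)"
proof -
  have "((\<lambda>y. G (y + h *\<^sub>R w)) has_derivative G2) (at z)"
    using has_derivative_compose[OF has_derivative_add_const[OF has_derivative_ident] assms(2)]
    by simp
  then have "((\<lambda>y. G y - G (y + h *\<^sub>R w)) has_derivative (\<lambda>v. G1 v - G2 v)) (at z)"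
    by (rule has_derivative_diff[OF assms(1)])
  then show ?thesis
    unfolding halfdiff_def[abs_def] by (rule has_derivative_scaleR_right)
qed

lemma dd_halfdiff:
  assumes "\<And>y. G differentiable (at y)"
  shows "dd [v] (halfdiff h w G) = halfdiff h w (dd [v] G)"
proof
  fix z
  have "(halfdiff h w G has_derivative
      (\<lambda>v. (1/2) *\<^sub>R (frechet_derivative G (at z) v - frechet_derivative G (at (z + h *\<^sub>R w)) v))) (at z)"
    by (intro has_derivative_halfdiff) (use assms frechet_derivative_works in blast)+
  then show "dd [v] (halfdiff h w G) z = halfdiff h w (dd [v] G) z"
    by (simp add: frechet_derivative_at[symmetric] halfdiff_def)
qed

lemma dd_replicate_halfdiff:
  assumes "smooth_along w G"
  shows "dd (replicate j w) (halfdiff h w G) = halfdiff h w (dd (replicate j w) G)"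
proof (induction j)
  case (Suc j)
  have "\<And>y. dd (replicate j w) G differentiable (at y)"
    using assms unfolding smooth_along_def by blast
  then show ?case
    using dd_halfdiff[of "dd (replicate j w) G" w h w] Suc by simp
qed simp

lemma smooth_along_halfdiff: "smooth_along w G \<Longrightarrow> smooth_along w (halfdiff h w G)"
proof -
  assume G: "smooth_along w G"
  have "halfdiff h w (dd (replicate j w) G) differentiable (at z)" for j z
  proof -
    have "\<And>y. dd (replicate j w) G differentiable (at y)"
      using G unfolding smooth_along_def by blast
    then show ?thesis
      using has_derivative_halfdiff[OF frechet_derivative_works[THEN iffD1] frechet_derivative_works[THEN iffD1]]
      unfolding differentiable_def by blast
  qed
  then show ?thesis
    unfolding smooth_along_def dd_replicate_halfdiff[OF G] by blast
qed

lemma norm_halfdiff_le: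
  assumes "\<And>y. G differentiable (at y)" "\<And>t. norm (dd [w] G (z + t *\<^sub>R w)) \<le> B"
  shows "norm (halfdiff h w G z) \<le> \<bar>h\<bar> / 2 * B"
proof -
  define f where "f t = G (z + t *\<^sub>R w)" for t
  have f': "(f has_derivative (\<lambda>s. s *\<^sub>R dd [w] G (z + t *\<^sub>R w))) (at t within UNIV)" for t
  proof -
    have G': "(G has_derivative frechet_derivative G (at (z + t *\<^sub>R w))) (at (z + t *\<^sub>R w))"
      using assms(1) frechet_derivative_works by blast
    have "((\<lambda>t. z + t *\<^sub>R w) has_derivative (\<lambda>s. s *\<^sub>R w)) (at t)"
      by (auto intro!: derivative_eq_intros)
    from has_derivative_compose[OF this G'] show ?thesis
      unfolding f_def by (simp add: linear_cmul[OF has_derivative_linear[OF G']])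
  qed
  have "onorm (\<lambda>s::real. s *\<^sub>R dd [w] G (z + t *\<^sub>R w)) = norm (dd [w] G (z + t *\<^sub>R w))" for t
    using onorm_scaleR_left[OF bounded_linear_ident] by (simp add: onorm_id)
  then have "onorm (\<lambda>s::real. s *\<^sub>R dd [w] G (z + t *\<^sub>R w)) \<le> B" for t
    using assms(2) by simp
  then have "norm (f 0 - f h) \<le> B * norm (0 - h)"
    by (intro differentiable_bound[OF convex_UNIV f']) auto
  then have "norm (G z - G (z + h *\<^sub>R w)) \<le> \<bar>h\<bar> * B"
    by (simp add: f_def mult.commute)
  then show ?thesis
    unfolding halfdiff_def by simp
qed

lemma norm_halfdiff_iterate_le:
  assumes "smooth_along w G" "\<And>t. norm (dd (replicate M w) G (z + t *\<^sub>R w)) \<le> B"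
  shows "norm ((halfdiff h w ^^ M) G z) \<le> (\<bar>h\<bar> / 2) ^ M * B"
  using assms
proof (induction M arbitrary: G B)
  case 0
  from "0.prems"(2)[of 0] show ?case by simp
next
  case (Suc M)
  have "norm (dd (replicate M w) (halfdiff h w G) (z + t *\<^sub>R w)) \<le> \<bar>h\<bar> / 2 * B" for t
  proof -
    have "norm (halfdiff h w (dd (replicate M w) G) (z + t *\<^sub>R w)) \<le> \<bar>h\<bar> / 2 * B"
    proof (rule norm_halfdiff_le)
      show "dd (replicate M w) G differentiable (at y)" for y
        using Suc.prems(1) unfolding smooth_along_def by blast
      show "norm (dd [w] (dd (replicate M w) G) (z + t *\<^sub>R w + s *\<^sub>R w)) \<le> B" for s
        using Suc.prems(2)[of "t + s"] by (simp add: scaleR_add_left add.assoc)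
    qed
    then show ?thesis
      by (simp add: dd_replicate_halfdiff[OF Suc.prems(1)])
  qed
  from Suc.IH[OF smooth_along_halfdiff[OF Suc.prems(1)] this]
  have "norm ((halfdiff h w ^^ M) (halfdiff h w G) z) \<le> (\<bar>h\<bar> / 2) ^ M * (\<bar>h\<bar> / 2 * B)" .
  then show ?case
    by (simp only: funpow_Suc_right comp_apply power_Suc mult_ac)
qed

lemma halfdiff_iterate_periodic:
  assumes "\<And>z. G (z + p) = G z"
  shows "(halfdiff h w ^^ M) G (z + p) = (halfdiff h w ^^ M) G z"
proof (induction M arbitrary: z)
  case (Suc M)
  let ?Q = "(halfdiff h w ^^ M) G"
  have "?Q (z + p + h *\<^sub>R w) = ?Q (z + h *\<^sub>R w)"
    using Suc.IH[of "z + h *\<^sub>R w"] by (simp add: add_ac)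
  then show ?case
    using Suc.IH[of z] by (simp add: halfdiff_def[of h w ?Q])
qed (simp add: assms)

lemma dd_replicate_slice:
  fixes G :: "'a::real_normed_vector \<times> 'b::real_normed_vector \<Rightarrow> 'c::real_normed_vector"
  assumes "smooth_along (0, v) G"
  shows "dd (replicate j v) (\<lambda>\<xi>. G (x, \<xi>)) = (\<lambda>\<xi>. dd (replicate j (0, v)) G (x, \<xi>))"
proof (induction j)
  case (Suc j)
  show ?case
  proof
    fix \<xi>
    let ?H = "dd (replicate j (0, v)) G"
    have "(?H has_derivative frechet_derivative ?H (at (x, \<xi>))) (at (x, \<xi>))"
      using assms frechet_derivative_works unfolding smooth_along_def by blast
    from has_derivative_compose[OF has_derivative_Pair[OF has_derivative_const has_derivative_ident] this]
    have "((\<lambda>\<xi>. ?H (x, \<xi>)) has_derivative (\<lambda>u. frechet_derivative ?H (at (x, \<xi>)) (0, u))) (at \<xi>)"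
      by simp
    then show "dd (replicate (Suc j) v) (\<lambda>\<xi>. G (x, \<xi>)) \<xi> = dd (replicate (Suc j) (0, v)) G (x, \<xi>)"
      using Suc.IH by (simp add: frechet_derivative_at[symmetric])
  qed
qed simp

lemma smooth_along_slice:
  fixes G :: "'a::real_normed_vector \<times> 'b::real_normed_vector \<Rightarrow> 'c::real_normed_vector"
  assumes "smooth_along (0, v) G"
  shows "smooth_along v (\<lambda>\<xi>. G (x, \<xi>))"
  unfolding smooth_along_def dd_replicate_slice[OF assms]
proof (intro allI)
  fix j \<xi>
  have "dd (replicate j (0, v)) G differentiable (at (x, \<xi>))"
    using assms unfolding smooth_along_def by blast
  moreover have "(\<lambda>\<xi>. (x, \<xi>)) differentiable (at \<xi>)"
    unfolding differentiable_def
    using has_derivative_Pair[OF has_derivative_const has_derivative_ident] by blast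
  ultimately show "(\<lambda>\<xi>. dd (replicate j (0, v)) G (x, \<xi>)) differentiable (at \<xi>)"
    by (rule differentiable_compose[of "dd (replicate j (0, v)) G" "\<lambda>\<xi>. (x, \<xi>)"])
qed

abbreviation torus_cell :: "(real^'n) set" where
  "torus_cell \<equiv> cbox (\<chi> i. - pi) (\<chi> i. pi)"

lemma integrable_on_torus_cell:
  fixes f :: "real^'n \<Rightarrow> 'b::banach"
  shows "continuous_on UNIV f \<Longrightarrow> f integrable_on torus_cell"
  by (rule integrable_continuous) (rule continuous_on_subset, auto)

lemma norm_integral_torus_cell_le:
  fixes f :: "real^'n \<Rightarrow> 'b::banach"
  assumes "continuous_on UNIV f" "\<And>\<xi>. norm (f \<xi>) \<le> B"
  shows "norm (integral torus_cell f) \<le> B * measure lborel (torus_cell :: (real^'n) set)"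
  using has_integral_bound[OF _ integrable_integral[OF integrable_on_torus_cell[OF assms(1)]]] assms(2)
  by (metis norm_ge_zero order_trans)

text \<open>Split the shifted cell at \<open>\<xi>\<^sub>i = \<pi>\<close> and translate the upper piece back by one period.\<close>

lemma integral_torus_cell_shift:
  fixes \<phi> :: "real^'n \<Rightarrow> 'b::banach"
  assumes cont: "continuous_on UNIV \<phi>" and per: "\<And>\<xi>. \<phi> (\<xi> + axis i (2 * pi)) = \<phi> \<xi>"
    and h: "0 \<le> h" "h \<le> 2 * pi"
  shows "integral torus_cell (\<lambda>\<xi>. \<phi> (\<xi> + axis i h)) = integral torus_cell \<phi>"
proof -
  define a :: "real^'n" where "a = (\<chi> _. - pi)"
  define b :: "real^'n" where "b = (\<chi> _. pi)"
  define c :: "real^'n" where "c = axis i h"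
  define e :: "real^'n" where "e = axis i (2 * pi)"
  define b' :: "real^'n" where "b' = (\<chi> j. if j = i then - pi + h else pi)"
  define k :: "real^'n" where "k = axis i 1"
  have k: "k \<in> Basis"
    unfolding k_def by simp
  have int: "\<phi> integrable_on cbox u v" for u v
    by (rule integrable_continuous) (rule continuous_on_subset[OF cont], simp)
  have ik: "x \<bullet> k = x $ i" for x :: "real^'n"
    unfolding k_def by (simp add: inner_axis)
  have "integral (cbox a b) (\<lambda>\<xi>. \<phi> (\<xi> + c)) = integral (cbox a b) (\<phi> \<circ> (+) c)"
    by (simp add: o_def add.commute)
  also have "\<dots> = integral (cbox (a + c) (b + c)) \<phi>"
    by (rule integral_shift_cbox_plus)
  also have "\<dots> = integral (cbox (a + c) (b + c) \<inter> {x. x \<bullet> k \<le> pi}) \<phi>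
      + integral (cbox (a + c) (b + c) \<inter> {x. x \<bullet> k \<ge> pi}) \<phi>"
    by (rule integral_split[OF int k])
  also have "cbox (a + c) (b + c) \<inter> {x. x \<bullet> k \<le> pi} = cbox a b \<inter> {x. x \<bullet> k \<ge> - pi + h}"
    using h unfolding ik
    by (auto simp: mem_box_cart a_def b_def c_def axis_def split: if_splits; smt (verit) pi_gt_zero)+
  also have "cbox (a + c) (b + c) \<inter> {x. x \<bullet> k \<ge> pi} = cbox (a + e) (b' + e)"
    using h unfolding ik
    by (auto simp: mem_box_cart a_def b_def c_def e_def b'_def axis_def split: if_splits; smt (verit) pi_gt_zero)+
  also have "integral (cbox (a + e) (b' + e)) \<phi> = integral (cbox a b') (\<phi> \<circ> (+) e)"
    by (rule integral_shift_cbox_plus[symmetric])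
  also have "\<phi> \<circ> (+) e = \<phi>"
    using per unfolding e_def by (simp add: o_def add.commute fun_eq_iff)
  also have "cbox a b' = cbox a b \<inter> {x. x \<bullet> k \<le> - pi + h}"
    using h unfolding ik
    by (auto simp: mem_box_cart a_def b_def b'_def split: if_splits; smt (verit) pi_gt_zero)+
  also have "integral (cbox a b \<inter> {x. x \<bullet> k \<ge> - pi + h}) \<phi> + integral (cbox a b \<inter> {x. x \<bullet> k \<le> - pi + h}) \<phi>
      = integral (cbox a b) \<phi>"
    using integral_split[OF int k, of a b "- pi + h"] by simp
  finally show ?thesis
    unfolding a_def b_def c_def .
qed

definition plane_wave :: "int^'n \<Rightarrow> real^'n \<Rightarrow> complex" where
  "plane_wave d \<xi> = exp (\<i> * complex_of_real ((\<chi> j. real_of_int (d $ j)) \<bullet> \<xi>))"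

lemma norm_plane_wave [simp]: "norm (plane_wave d \<xi>) = 1"
  unfolding plane_wave_def by simp

lemma continuous_on_plane_wave: "continuous_on S (plane_wave d)"
  unfolding plane_wave_def by (intro continuous_intros)

lemma plane_wave_shift:
  "plane_wave d (\<xi> + axis i t) = plane_wave d \<xi> * exp (\<i> * complex_of_real (real_of_int (d $ i) * t))"
  unfolding plane_wave_def by (simp add: inner_add_right inner_axis distrib_left exp_add)

lemma plane_wave_periodic: "plane_wave d (\<xi> + axis i (2 * pi)) = plane_wave d \<xi>"
  using exp_2pi_1_int[of "d $ i"] by (simp add: plane_wave_shift mult_ac)

lemma plane_wave_half_period:
  assumes "d $ i \<noteq> 0"
  shows "plane_wave d (\<xi> + axis i (pi / \<bar>real_of_int (d $ i)\<bar>)) = - plane_wave d \<xi>"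
proof -
  have "exp (\<i> * complex_of_real (real_of_int (d $ i) * (pi / \<bar>real_of_int (d $ i)\<bar>))) = -1"
  proof (cases "d $ i > 0")
    case True
    then show ?thesis by simp
  next
    case False
    then have "real_of_int (d $ i) * (pi / \<bar>real_of_int (d $ i)\<bar>) = - pi"
      using assms by simp
    then show ?thesis
      by (simp add: exp_minus)
  qed
  then show ?thesis
    by (simp add: plane_wave_shift)
qed

lemma continuous_on_halfdiff_iterate:
  "continuous_on UNIV G \<Longrightarrow> continuous_on UNIV ((halfdiff h w ^^ M) G)"
proof (induction M)
  case (Suc M)
  let ?Q = "(halfdiff h w ^^ M) G"
  have shifted: "continuous_on UNIV (\<lambda>z. ?Q (z + h *\<^sub>R w))"
    by (intro continuous_on_compose2[OF Suc.IH[OF Suc.prems]] continuous_intros) auto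
  have "(halfdiff h w ^^ Suc M) G = (\<lambda>z. (1/2) *\<^sub>R (?Q z - ?Q (z + h *\<^sub>R w)))"
    by (simp add: fun_eq_iff halfdiff_def[of h w ?Q])
  then show ?case
    by (simp only:) (intro shifted Suc.IH[OF Suc.prems] continuous_intros)
qed simp

lemma integral_plane_wave_halfdiff:
  fixes g :: "real^'n \<Rightarrow> complex"
  assumes cont: "continuous_on UNIV g" and per: "\<And>\<xi>. g (\<xi> + axis i (2 * pi)) = g \<xi>"
    and d: "d $ i \<noteq> 0" and h: "h = pi / \<bar>real_of_int (d $ i)\<bar>"
  shows "integral torus_cell (\<lambda>\<xi>. plane_wave d \<xi> * halfdiff h (axis i 1) g \<xi>)
       = integral torus_cell (\<lambda>\<xi>. plane_wave d \<xi> * g \<xi>)"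
proof -
  define \<phi> where "\<phi> \<xi> = plane_wave d \<xi> * g \<xi>" for \<xi>
  have cont\<phi>: "continuous_on UNIV \<phi>"
    unfolding \<phi>_def by (intro continuous_intros continuous_on_plane_wave cont)
  have cont\<phi>': "continuous_on UNIV (\<lambda>\<xi>. \<phi> (\<xi> + axis i h))"
    by (intro continuous_on_compose2[OF cont\<phi>] continuous_intros) auto
  have "1 \<le> \<bar>real_of_int (d $ i)\<bar>"
    using d by linarith
  then have "0 \<le> h" "h \<le> 2 * pi"
    unfolding h using pi_gt_zero by (simp_all add: divide_le_eq)
  then have shift: "integral torus_cell (\<lambda>\<xi>. \<phi> (\<xi> + axis i h)) = integral torus_cell \<phi>"
    by (intro integral_torus_cell_shift[OF cont\<phi>]) (simp_all add: \<phi>_def plane_wave_periodic per)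
  have "h *\<^sub>R axis i (1::real) = axis i h"
    by (simp add: vec_eq_iff axis_def)
  then have "(\<lambda>\<xi>. plane_wave d \<xi> * halfdiff h (axis i 1) g \<xi>) = (\<lambda>\<xi>. (\<phi> \<xi> + \<phi> (\<xi> + axis i h)) / 2)"
    using plane_wave_half_period[OF d]
    by (simp add: fun_eq_iff halfdiff_def \<phi>_def h scaleR_conv_of_real field_simps)
  moreover have "(\<lambda>\<xi>. plane_wave d \<xi> * g \<xi>) = \<phi>"
    by (simp add: fun_eq_iff \<phi>_def)
  ultimately show ?thesis
    using integral_add[OF integrable_on_torus_cell[OF cont\<phi>] integrable_on_torus_cell[OF cont\<phi>']]
    by (simp add: shift)
qed

lemma integral_plane_wave_halfdiff_iterate:
  fixes g :: "real^'n \<Rightarrow> complex"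
  assumes cont: "continuous_on UNIV g" and per: "\<And>\<xi>. g (\<xi> + axis i (2 * pi)) = g \<xi>"
    and d: "d $ i \<noteq> 0" and h: "h = pi / \<bar>real_of_int (d $ i)\<bar>"
  shows "integral torus_cell (\<lambda>\<xi>. plane_wave d \<xi> * (halfdiff h (axis i 1) ^^ M) g \<xi>)
       = integral torus_cell (\<lambda>\<xi>. plane_wave d \<xi> * g \<xi>)"
proof (induction M)
  case (Suc M)
  let ?Q = "(halfdiff h (axis i 1) ^^ M) g"
  have "integral torus_cell (\<lambda>\<xi>. plane_wave d \<xi> * halfdiff h (axis i 1) ?Q \<xi>)
      = integral torus_cell (\<lambda>\<xi>. plane_wave d \<xi> * ?Q \<xi>)"
    using continuous_on_halfdiff_iterate[OF cont] halfdiff_iterate_periodic[of g, OF per] d h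
    by (rule integral_plane_wave_halfdiff)
  with Suc show ?case
    by simp
qed simp

lemma oscillatory_integral_decay:
  fixes g :: "real^'n \<Rightarrow> complex"
  assumes smooth: "smooth_along (axis i 1) g" and per: "\<And>\<xi>. g (\<xi> + axis i (2 * pi)) = g \<xi>"
    and bound: "\<And>\<xi>. norm (dd (replicate M (axis i 1)) g \<xi>) \<le> B"
  shows "\<bar>real_of_int (d $ i)\<bar> ^ M * norm (integral torus_cell (\<lambda>\<xi>. plane_wave d \<xi> * g \<xi>))
    \<le> (pi / 2) ^ M * B * measure lborel (torus_cell :: (real^'n) set)"
proof (cases "d $ i = 0")
  case True
  have "0 \<le> B"
    using bound norm_ge_zero order_trans by blast
  show ?thesis
  proof (cases M)
    case 0
    have "norm (integral torus_cell (\<lambda>\<xi>. plane_wave d \<xi> * g \<xi>)) \<le> B * measure lborel (torus_cell :: (real^'n) set)"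
      using bound[unfolded 0] smooth_along_continuous_on[OF smooth]
      by (intro norm_integral_torus_cell_le continuous_intros continuous_on_plane_wave) (auto simp: norm_mult)
    then show ?thesis
      using 0 by simp
  qed (use True \<open>0 \<le> B\<close> in simp)
next
  case False
  define t where "t = \<bar>real_of_int (d $ i)\<bar>"
  define h where "h = pi / t"
  have t: "0 < t"
    using False unfolding t_def by simp
  let ?G = "(halfdiff h (axis i 1) ^^ M) g"
  have cont: "continuous_on UNIV ?G"
    by (intro continuous_on_halfdiff_iterate smooth_along_continuous_on[OF smooth])
  have "integral torus_cell (\<lambda>\<xi>. plane_wave d \<xi> * ?G \<xi>) = integral torus_cell (\<lambda>\<xi>. plane_wave d \<xi> * g \<xi>)"
    using smooth_along_continuous_on[OF smooth] per False
    by (rule integral_plane_wave_halfdiff_iterate) (simp add: h_def t_def)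
  moreover have "norm (integral torus_cell (\<lambda>\<xi>. plane_wave d \<xi> * ?G \<xi>))
      \<le> (h / 2) ^ M * B * measure lborel (torus_cell :: (real^'n) set)"
  proof (rule norm_integral_torus_cell_le)
    show "continuous_on UNIV (\<lambda>\<xi>. plane_wave d \<xi> * ?G \<xi>)"
      by (intro continuous_intros continuous_on_plane_wave cont)
    show "norm (plane_wave d \<xi> * ?G \<xi>) \<le> (h / 2) ^ M * B" for \<xi>
      using norm_halfdiff_iterate_le[OF smooth bound, where z = \<xi> and h = h] t by (simp add: norm_mult h_def)
  qed
  ultimately have "t ^ M * norm (integral torus_cell (\<lambda>\<xi>. plane_wave d \<xi> * g \<xi>))
      \<le> t ^ M * ((h / 2) ^ M * B * measure lborel (torus_cell :: (real^'n) set))"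
    using t by (simp add: mult_left_mono)
  also have "\<dots> = (t * (h / 2)) ^ M * B * measure lborel (torus_cell :: (real^'n) set)"
    by (simp only: power_mult_distrib mult.assoc)
  also have "t * (h / 2) = pi / 2"
    using t unfolding h_def by simp
  finally show ?thesis
    unfolding t_def .
qed

definition lattice_weight :: "int^'n \<Rightarrow> real" where
  "lattice_weight d = (\<Prod>i\<in>UNIV. 1 + \<bar>real_of_int (d $ i)\<bar>)"

lemma lattice_weight_ge_1: "1 \<le> lattice_weight d"
  unfolding lattice_weight_def by (rule prod_ge_1) auto

lemma lattice_weight_pos: "0 < lattice_weight d"
  using lattice_weight_ge_1[of d] by linarith

lemma lattice_weight_nonneg [simp]: "0 \<le> lattice_weight d"
  using lattice_weight_pos[of d] by linarith

lemma lattice_weight_uminus: "lattice_weight (- d) = lattice_weight d"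
  unfolding lattice_weight_def by simp

lemma lattice_weight_add_le: "lattice_weight (a + b) \<le> lattice_weight a * lattice_weight b"
proof -
  have "lattice_weight (a + b)
      \<le> (\<Prod>i\<in>UNIV. (1 + \<bar>real_of_int (a $ i)\<bar>) * (1 + \<bar>real_of_int (b $ i)\<bar>))"
    unfolding lattice_weight_def
  proof (rule prod_mono)
    fix i
    let ?a = "\<bar>real_of_int (a $ i)\<bar>" and ?b = "\<bar>real_of_int (b $ i)\<bar>"
    have "\<bar>real_of_int ((a + b) $ i)\<bar> \<le> ?a + ?b" "0 \<le> ?a * ?b"
      by simp_all
    then have "1 + \<bar>real_of_int ((a + b) $ i)\<bar> \<le> 1 + ?a + ?b + ?a * ?b"
      by linarith
    also have "\<dots> = (1 + ?a) * (1 + ?b)"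
      by (simp add: algebra_simps)
    finally show "0 \<le> 1 + \<bar>real_of_int ((a + b) $ i)\<bar> \<and> 1 + \<bar>real_of_int ((a + b) $ i)\<bar> \<le> (1 + ?a) * (1 + ?b)"
      by simp
  qed
  also have "\<dots> = lattice_weight a * lattice_weight b"
    unfolding lattice_weight_def by (rule prod.distrib)
  finally show ?thesis .
qed

lemma one_plus_power_le:
  fixes t :: real
  assumes "0 \<le> t"
  shows "(1 + t) ^ n \<le> 2 ^ n * (1 + t ^ n)"
proof (cases "t \<le> 1")
  case True
  then have "(1 + t) ^ n \<le> 2 ^ n * 1"
    using assms by (simp add: power_mono)
  also have "\<dots> \<le> 2 ^ n * (1 + t ^ n)"
    using assms by (intro mult_left_mono) auto
  finally show ?thesis .
next
  case False
  then have "(1 + t) ^ n \<le> (2 * t) ^ n"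
    by (intro power_mono) auto
  also have "\<dots> \<le> 2 ^ n * (1 + t ^ n)"
    by (simp add: power_mult_distrib)
  finally show ?thesis .
qed

text \<open>Bounding the product by its largest factor reduces a bound in all coordinates
  simultaneously to bounds in one coordinate at a time.\<close>

lemma prod_one_plus_power_le:
  fixes t :: "'n::finite \<Rightarrow> real"
  assumes "\<And>i. 0 \<le> t i"
  shows "(\<Prod>i\<in>UNIV. 1 + t i) ^ N \<le> 2 ^ (N * CARD('n)) * (1 + (\<Sum>i\<in>UNIV. t i ^ (N * CARD('n))))"
proof -
  have "Max (range t) \<in> range t"
    by (rule Max_in) auto
  then obtain i0 where i0: "t i0 = Max (range t)"
    by (metis imageE)
  have max: "t i \<le> t i0" for i
    unfolding i0 by simp
  have "(\<Prod>i\<in>UNIV. 1 + t i) ^ N \<le> ((1 + t i0) ^ CARD('n)) ^ N"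
    using max assms by (intro power_mono prod_nonneg) (auto intro: prod_le_power add_nonneg_nonneg)
  also have "\<dots> = (1 + t i0) ^ (N * CARD('n))"
    by (simp add: power_mult[symmetric] mult.commute)
  also have "\<dots> \<le> 2 ^ (N * CARD('n)) * (1 + t i0 ^ (N * CARD('n)))"
    by (rule one_plus_power_le[OF assms])
  also have "t i0 ^ (N * CARD('n)) \<le> (\<Sum>i\<in>UNIV. t i ^ (N * CARD('n)))"
    using assms by (intro member_le_sum) auto
  finally show ?thesis
    by simp
qed

lemma lattice_weight_power_le:
  "lattice_weight d ^ N \<le>
     2 ^ (N * CARD('n)) * (1 + (\<Sum>i\<in>UNIV. \<bar>real_of_int (d $ i)\<bar> ^ (N * CARD('n))))"
  for d :: "int^'n"
  unfolding lattice_weight_def by (rule prod_one_plus_power_le) simp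

lemma one_plus_sum_le_prod:
  fixes t :: "'a \<Rightarrow> real"
  assumes "finite A" "\<And>i. i \<in> A \<Longrightarrow> 0 \<le> t i"
  shows "1 + (\<Sum>i\<in>A. t i) \<le> (\<Prod>i\<in>A. 1 + t i)"
  using assms
proof (induction A rule: finite_induct)
  case (insert x F)
  have "1 \<le> (\<Prod>i\<in>F. 1 + t i)"
    using insert by (intro prod_ge_1) auto
  then have "t x * 1 \<le> t x * (\<Prod>i\<in>F. 1 + t i)"
    using insert by (intro mult_left_mono) auto
  then show ?case
    using insert by (simp add: algebra_simps)
qed simp

lemma abs_lat_le:
  assumes "0 < \<epsilon>" "\<epsilon> \<le> 1"
  shows "\<bar>lat \<epsilon> k $ i\<bar> \<le> \<bar>real_of_int (k $ i)\<bar>"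
  using assms by (simp add: lat_def abs_mult mult_left_le_one_le)

lemma jbr_ge_1: "1 \<le> jbr x"
  unfolding jbr_def by simp

lemma jbr_lat_le_lattice_weight:
  assumes "0 < \<epsilon>" "\<epsilon> \<le> 1"
  shows "jbr (lat \<epsilon> k) \<le> lattice_weight k"
proof -
  have "jbr (lat \<epsilon> k) \<le> 1 + norm (lat \<epsilon> k)"
    unfolding jbr_def by (rule real_le_lsqrt) (auto simp: power2_eq_square algebra_simps)
  also have "\<dots> \<le> 1 + (\<Sum>i\<in>UNIV. \<bar>lat \<epsilon> k $ i\<bar>)"
    using norm_le_l1_cart by simp
  also have "\<dots> \<le> (\<Prod>i\<in>UNIV. 1 + \<bar>lat \<epsilon> k $ i\<bar>)"
    by (rule one_plus_sum_le_prod) auto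
  also have "\<dots> \<le> lattice_weight k"
    unfolding lattice_weight_def using abs_lat_le[OF assms] by (intro prod_mono) auto
  finally show ?thesis .
qed

lemma jbr_lat_powr_le:
  assumes "0 < \<epsilon>" "\<epsilon> \<le> 1"
  shows "jbr (lat \<epsilon> k) powr s \<le> lattice_weight k ^ nat \<lceil>s\<rceil>"
proof -
  have "s \<le> real (nat \<lceil>s\<rceil>)"
    by linarith
  then have "jbr (lat \<epsilon> k) powr s \<le> jbr (lat \<epsilon> k) powr real (nat \<lceil>s\<rceil>)"
    using jbr_ge_1 by (rule powr_mono)
  also have "\<dots> \<le> lattice_weight k powr real (nat \<lceil>s\<rceil>)"
    using jbr_lat_le_lattice_weight[OF assms] order_trans[OF zero_le_one jbr_ge_1]
    by (intro powr_mono2) auto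
  also have "\<dots> = lattice_weight k ^ nat \<lceil>s\<rceil>"
    using lattice_weight_pos by (rule powr_realpow)
  finally show ?thesis .
qed

lemma summable_on_int_inverse_square: "(\<lambda>z::int. 1 / (1 + \<bar>real_of_int z\<bar>) ^ 2) summable_on UNIV"
proof -
  define g where "g z = 1 / (1 + \<bar>real_of_int z\<bar>) ^ 2" for z :: int
  define g' where "g' n = 1 / (1 + real n) ^ 2" for n :: nat
  have "summable (\<lambda>n. inverse (real (Suc n) ^ 2))"
    using inverse_power_summable[of 2] by (subst summable_Suc_iff) simp
  then have "summable g'"
    unfolding g'_def by (simp add: inverse_eq_divide)
  then have g': "g' summable_on UNIV"
    by (subst summable_on_UNIV_nonneg_real_iff) (auto simp: g'_def)
  have nonneg: "g summable_on range int"
    using g' unfolding g'_def by (subst summable_on_reindex) (auto simp: g_def o_def)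
  have neg: "g summable_on range (\<lambda>n::nat. - int n - 1)"
  proof (subst summable_on_reindex)
    show "(g \<circ> (\<lambda>n::nat. - int n - 1)) summable_on UNIV"
    proof (rule summable_on_comparison_test[OF g'])
      fix n :: nat
      have "(1 + real n) ^ 2 \<le> (1 + \<bar>real_of_int (- int n - 1)\<bar>) ^ 2"
        by (intro power_mono) auto
      then show "(g \<circ> (\<lambda>n::nat. - int n - 1)) n \<le> g' n"
        unfolding g_def g'_def o_def by (auto intro: divide_left_mono)
    qed (simp add: g_def)
  qed (auto simp: inj_on_def)
  have "range int \<union> range (\<lambda>n::nat. - int n - 1) = (UNIV :: int set)"
  proof -
    have "z \<in> range int \<union> range (\<lambda>n::nat. - int n - 1)" for z :: int
    proof (cases "z \<ge> 0")
      case True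
      then have "z = int (nat z)" by simp
      then show ?thesis by blast
    next
      case False
      then have "z = - int (nat (- z - 1)) - 1" by simp
      then show ?thesis by blast
    qed
    then show ?thesis by blast
  qed
  then show ?thesis
    using summable_on_Un_disjoint[OF nonneg neg] unfolding g_def by fastforce
qed

text \<open>The partial sums factor over the coordinates, each factor bounded by the one-dimensional series.\<close>

lemma summable_on_lattice_weight_inverse_square:
  "(\<lambda>l::int^'n. 1 / lattice_weight l ^ 2) summable_on UNIV"
proof (rule nonneg_bdd_above_summable_on)
  define g where "g z = 1 / (1 + \<bar>real_of_int z\<bar>) ^ 2" for z :: int
  have g: "g summable_on UNIV"
    unfolding g_def by (rule summable_on_int_inverse_square)
  have weight: "1 / lattice_weight l ^ 2 = (\<Prod>i\<in>UNIV. g (l $ i))" for l :: "int^'n"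
    by (simp add: lattice_weight_def g_def prod_power_distrib prod_dividef)
  have "(\<Sum>l\<in>F. 1 / lattice_weight l ^ 2) \<le> infsum g UNIV ^ CARD('n)" if "finite F" for F :: "(int^'n) set"
  proof -
    define B where "B i = (\<lambda>l. l $ i) ` F" for i
    have fin: "finite (B i)" for i
      unfolding B_def using that by simp
    have "(\<Sum>l\<in>F. 1 / lattice_weight l ^ 2) = (\<Sum>p\<in>vec_nth ` F. \<Prod>i\<in>UNIV. g (p i))"
      unfolding weight by (subst sum.reindex) (auto simp: inj_on_def vec_nth_inject)
    also have "\<dots> \<le> (\<Sum>p\<in>PiE UNIV B. \<Prod>i\<in>UNIV. g (p i))"
      using fin by (intro sum_mono2) (auto simp: B_def finite_PiE g_def intro: prod_nonneg)
    also have "\<dots> = (\<Prod>i\<in>UNIV. \<Sum>z\<in>B i. g z)"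
      by (rule prod_sum_PiE[symmetric]) (use fin in auto)
    also have "\<dots> \<le> (\<Prod>i\<in>(UNIV::'n set). infsum g UNIV)"
      using finite_sum_le_infsum[OF g fin] by (intro prod_mono) (auto simp: g_def intro: sum_nonneg)
    finally show ?thesis
      by simp
  qed
  then show "bdd_above (sum (\<lambda>l::int^'n. 1 / lattice_weight l ^ 2) ` {F. F \<subseteq> UNIV \<and> finite F})"
    by (intro bdd_aboveI[where M = "infsum g UNIV ^ CARD('n)"]) auto
qed simp

definition lattice_kernel ::
    "real \<Rightarrow> (real^'n \<Rightarrow> real^'n \<Rightarrow> real \<Rightarrow> complex) \<Rightarrow> int^'n \<Rightarrow> int^'n \<Rightarrow> complex" where
  "lattice_kernel \<epsilon> a k l = complex_of_real (1 / (2 * pi) ^ CARD('n)) *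
     integral torus_cell (\<lambda>\<xi>. exp (\<i> * complex_of_real (((lat \<epsilon> l - lat \<epsilon> k) \<bullet> \<xi>) / \<epsilon>)) * a (lat \<epsilon> k) \<xi> \<epsilon>)"

definition kernel_op :: "('k \<Rightarrow> 'l \<Rightarrow> complex) \<Rightarrow> ('l \<Rightarrow> complex) \<Rightarrow> 'k \<Rightarrow> complex" where
  "kernel_op K v k = (\<Sum>\<^sub>\<infinity>l. K k l * v l)"

lemma OpT_eq_kernel_op:
  fixes a :: "real^'n \<Rightarrow> real^'n \<Rightarrow> real \<Rightarrow> complex"
  shows "OpT \<epsilon> a = kernel_op (lattice_kernel \<epsilon> a)"
proof (intro ext)
  fix v k
  let ?c = "complex_of_real (1 / (2 * pi) ^ CARD('n))"
  let ?E = "\<lambda>l \<xi>. exp (\<i> * complex_of_real (((lat \<epsilon> l - lat \<epsilon> k) \<bullet> \<xi>) / \<epsilon>)) * a (lat \<epsilon> k) \<xi> \<epsilon>"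
  have "lattice_kernel \<epsilon> a k l * v l = ?c * integral torus_cell (\<lambda>\<xi>. ?E l \<xi> * v l)" for l
    by (simp add: lattice_kernel_def)
  then show "OpT \<epsilon> a v k = kernel_op (lattice_kernel \<epsilon> a) v k"
    by (simp only: OpT_def kernel_op_def infsum_cmult_right')
qed

lemma lattice_kernel_eq_plane_wave:
  fixes a :: "real^'n \<Rightarrow> real^'n \<Rightarrow> real \<Rightarrow> complex"
  assumes "\<epsilon> \<noteq> 0"
  shows "lattice_kernel \<epsilon> a k l = complex_of_real (1 / (2 * pi) ^ CARD('n)) *
    integral torus_cell (\<lambda>\<xi>. plane_wave (l - k) \<xi> * a (lat \<epsilon> k) \<xi> \<epsilon>)"
proof -
  have "lat \<epsilon> l - lat \<epsilon> k = \<epsilon> *\<^sub>R (\<chi> j. real_of_int ((l - k) $ j))"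
    by (simp add: lat_def vec_eq_iff algebra_simps)
  then show ?thesis
    using assms by (simp add: lattice_kernel_def plane_wave_def)
qed

lemma order_function_bound:
  assumes "\<forall>x y \<xi> \<eta>. m x \<xi> \<le> C0 * jbr (x - y) powr N1 * m y \<eta>" "\<forall>x \<xi>. 0 \<le> m x \<xi>"
  shows "m x \<xi> \<le> \<bar>C0\<bar> * m 0 0 * jbr x powr N1"
proof -
  have "m x \<xi> \<le> C0 * jbr x powr N1 * m 0 0"
    using assms(1) by (metis diff_zero)
  also have "\<dots> \<le> \<bar>C0\<bar> * jbr x powr N1 * m 0 0"
    using assms(2) by (intro mult_right_mono) auto
  finally show ?thesis
    by (simp add: mult_ac)
qed

lemma smooth_along_symbol:
  fixes a :: "real^'n \<Rightarrow> real^'n \<Rightarrow> real \<Rightarrow> complex"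
  assumes "symbol_class k \<delta> m a" "0 < \<epsilon>" "\<epsilon> \<le> 1"
  shows "smooth_along (0, axis i 1) (\<lambda>z. a (fst z) (snd z) \<epsilon>)"
proof -
  have "set (replicate j (0, axis i 1)) \<subseteq> (Basis :: ((real^'n) \<times> (real^'n)) set)" for j
    by (auto simp: Basis_prod_def)
  then show ?thesis
    using assms unfolding symbol_class_def smooth_fun_def smooth_along_def by auto
qed

lemma symbol_slice_derivative_bound:
  fixes m :: "real^'n \<Rightarrow> real^'n \<Rightarrow> real" and a :: "real^'n \<Rightarrow> real^'n \<Rightarrow> real \<Rightarrow> complex"
  assumes order: "\<forall>x y \<xi> \<eta>. m x \<xi> \<le> C0 * jbr (x - y) powr N1 * m y \<eta>" and m: "\<forall>x \<xi>. 0 \<le> m x \<xi>"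
    and symbol: "symbol_class k \<delta> m a" and \<epsilon>: "0 < \<epsilon>" "\<epsilon> \<le> 1"
  shows "\<exists>B\<ge>0. \<forall>x \<xi>. norm (dd (replicate M (axis i 1)) (\<lambda>\<xi>. a x \<xi> \<epsilon>) \<xi>) \<le> B * jbr x powr N1"
proof -
  define w :: "(real^'n) \<times> (real^'n)" where "w = (0, axis i 1)"
  define F where "F = (\<lambda>z. a (fst z) (snd z) \<epsilon>)"
  have "set (replicate M w) \<subseteq> Basis"
    by (auto simp: w_def Basis_prod_def)
  then obtain C where "\<forall>\<epsilon>'\<in>{0<..1}. \<forall>x \<xi>. norm (dd (replicate M w) (\<lambda>z. a (fst z) (snd z) \<epsilon>') (x, \<xi>))
      \<le> C * m x \<xi> * \<epsilon>' powr (k - \<delta> * real (length (replicate M w)))"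
    using symbol unfolding symbol_class_def by blast
  then have C: "norm (dd (replicate M w) F (x, \<xi>)) \<le> C * m x \<xi> * \<epsilon> powr (k - \<delta> * M)" for x \<xi>
    using \<epsilon> unfolding F_def by simp
  define B where "B = \<bar>C\<bar> * \<bar>C0\<bar> * m 0 0 * \<epsilon> powr (k - \<delta> * M)"
  have "norm (dd (replicate M (axis i 1)) (\<lambda>\<xi>. a x \<xi> \<epsilon>) \<xi>) \<le> B * jbr x powr N1" for x \<xi>
  proof -
    have "dd (replicate M (axis i 1)) (\<lambda>\<xi>. F (x, \<xi>)) \<xi> = dd (replicate M w) F (x, \<xi>)"
      using dd_replicate_slice[OF smooth_along_symbol[OF symbol \<epsilon>]] by (simp add: w_def F_def)
    then have "norm (dd (replicate M (axis i 1)) (\<lambda>\<xi>. a x \<xi> \<epsilon>) \<xi>) \<le> C * m x \<xi> * \<epsilon> powr (k - \<delta> * M)"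
      using C[of x \<xi>] by (simp add: F_def)
    also have "\<dots> \<le> \<bar>C\<bar> * m x \<xi> * \<epsilon> powr (k - \<delta> * M)"
      using m by (intro mult_right_mono) auto
    also have "\<dots> \<le> \<bar>C\<bar> * (\<bar>C0\<bar> * m 0 0 * jbr x powr N1) * \<epsilon> powr (k - \<delta> * M)"
      using order_function_bound[OF order m] by (intro mult_right_mono mult_left_mono) auto
    finally show ?thesis
      by (simp add: B_def mult_ac)
  qed
  moreover have "0 \<le> B"
    using m unfolding B_def by simp
  ultimately show ?thesis
    by blast
qed

lemma lattice_kernel_coordinate_decay:
  fixes m :: "real^'n \<Rightarrow> real^'n \<Rightarrow> real" and a :: "real^'n \<Rightarrow> real^'n \<Rightarrow> real \<Rightarrow> complex"
  assumes order: "\<forall>x y \<xi> \<eta>. m x \<xi> \<le> C0 * jbr (x - y) powr N1 * m y \<eta>" and m: "\<forall>x \<xi>. 0 \<le> m x \<xi>"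
    and symbol: "symbol_class 0 \<delta> m a" and \<epsilon>: "0 < \<epsilon>" "\<epsilon> \<le> 1"
  shows "\<exists>C\<ge>0. \<forall>k l. \<bar>real_of_int ((l - k) $ i)\<bar> ^ M * norm (lattice_kernel \<epsilon> a k l)
           \<le> C * jbr (lat \<epsilon> k) powr N1"
proof -
  obtain B where B: "0 \<le> B" "\<And>x \<xi>. norm (dd (replicate M (axis i 1)) (\<lambda>\<xi>. a x \<xi> \<epsilon>) \<xi>) \<le> B * jbr x powr N1"
    using symbol_slice_derivative_bound[OF order m symbol \<epsilon>] by blast
  define c where "c = 1 / (2 * pi) ^ CARD('n)"
  define D where "D = c * (pi / 2) ^ M * B * measure lborel (torus_cell :: (real^'n) set)"
  have "\<bar>real_of_int ((l - k) $ i)\<bar> ^ M * norm (lattice_kernel \<epsilon> a k l) \<le> D * jbr (lat \<epsilon> k) powr N1" for k l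
  proof -
    let ?x = "lat \<epsilon> k"
    have per: "a ?x (\<xi> + axis i (2 * pi)) \<epsilon> = a ?x \<xi> \<epsilon>" for \<xi>
      using symbol \<epsilon> unfolding symbol_class_def periodic_xi_def by auto
    have "norm (lattice_kernel \<epsilon> a k l) = c * norm (integral torus_cell (\<lambda>\<xi>. plane_wave (l - k) \<xi> * a ?x \<xi> \<epsilon>))"
      using \<epsilon> by (simp add: lattice_kernel_eq_plane_wave norm_mult norm_divide norm_power c_def)
    moreover have "\<bar>real_of_int ((l - k) $ i)\<bar> ^ M * norm (integral torus_cell (\<lambda>\<xi>. plane_wave (l - k) \<xi> * a ?x \<xi> \<epsilon>))
        \<le> (pi / 2) ^ M * (B * jbr ?x powr N1) * measure lborel (torus_cell :: (real^'n) set)"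
      using smooth_along_slice[OF smooth_along_symbol[OF symbol \<epsilon>, of i], of ?x] per B(2)
      by (intro oscillatory_integral_decay) simp_all
    moreover have "0 \<le> c"
      unfolding c_def by simp
    ultimately have "\<bar>real_of_int ((l - k) $ i)\<bar> ^ M * norm (lattice_kernel \<epsilon> a k l)
        \<le> c * ((pi / 2) ^ M * (B * jbr ?x powr N1) * measure lborel (torus_cell :: (real^'n) set))"
      by (simp add: mult.left_commute mult_left_mono)
    then show ?thesis
      unfolding D_def by (simp add: mult_ac)
  qed
  moreover have "0 \<le> D"
    using B(1) unfolding D_def c_def by simp
  ultimately show ?thesis
    by blast
qed

definition off_diagonal_decay :: "(int^'n \<Rightarrow> int^'n \<Rightarrow> complex) \<Rightarrow> nat \<Rightarrow> bool" where
  "off_diagonal_decay K P \<longleftrightarrow>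
     (\<forall>N. \<exists>C\<ge>0. \<forall>k l. lattice_weight (l - k) ^ N * norm (K k l) \<le> C * lattice_weight k ^ P)"

lemma lattice_kernel_off_diagonal_decay:
  fixes m :: "real^'n \<Rightarrow> real^'n \<Rightarrow> real" and a :: "real^'n \<Rightarrow> real^'n \<Rightarrow> real \<Rightarrow> complex"
  assumes order: "\<forall>x y \<xi> \<eta>. m x \<xi> \<le> C0 * jbr (x - y) powr N1 * m y \<eta>" and m: "\<forall>x \<xi>. 0 \<le> m x \<xi>"
    and symbol: "symbol_class 0 \<delta> m a" and \<epsilon>: "0 < \<epsilon>" "\<epsilon> \<le> 1"
  shows "off_diagonal_decay (lattice_kernel \<epsilon> a) (nat \<lceil>N1\<rceil>)"
  unfolding off_diagonal_decay_def
proof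
  fix N
  define M where "M = N * CARD('n)"
  let ?K = "lattice_kernel \<epsilon> a" and ?J = "\<lambda>k. jbr (lat \<epsilon> k) powr N1"
  note decay = lattice_kernel_coordinate_decay[OF order m symbol \<epsilon>]
  obtain C' where C': "0 \<le> C'" "\<And>k l. norm (?K k l) \<le> C' * ?J k"
    using decay[where M = 0] by auto
  obtain C where C: "\<And>i. 0 \<le> C i"
    "\<And>i k l. \<bar>real_of_int ((l - k) $ i)\<bar> ^ M * norm (?K k l) \<le> C i * ?J k"
    using decay[where M = M] by metis
  define D where "D = 2 ^ M * (C' + (\<Sum>i\<in>UNIV. C i))"
  show "\<exists>D\<ge>0. \<forall>k l. lattice_weight (l - k) ^ N * norm (?K k l) \<le> D * lattice_weight k ^ nat \<lceil>N1\<rceil>"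
  proof (intro exI[of _ D] conjI allI)
    show "0 \<le> D"
      unfolding D_def using C C' by (simp add: sum_nonneg)
    fix k l :: "int^'n"
    have "lattice_weight (l - k) ^ N * norm (?K k l)
        \<le> 2 ^ M * (1 + (\<Sum>i\<in>UNIV. \<bar>real_of_int ((l - k) $ i)\<bar> ^ M)) * norm (?K k l)"
      unfolding M_def by (intro mult_right_mono lattice_weight_power_le) simp
    also have "\<dots> = 2 ^ M * (norm (?K k l) + (\<Sum>i\<in>UNIV. \<bar>real_of_int ((l - k) $ i)\<bar> ^ M * norm (?K k l)))"
      by (simp add: distrib_right sum_distrib_right)
    also have "\<dots> \<le> 2 ^ M * (C' * ?J k + (\<Sum>i\<in>UNIV. C i * ?J k))"
      using C C' by (intro mult_left_mono add_mono sum_mono) auto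
    also have "\<dots> = D * ?J k"
      by (simp only: D_def sum_distrib_right[symmetric] distrib_right mult.assoc)
    also have "\<dots> \<le> D * lattice_weight k ^ nat \<lceil>N1\<rceil>"
      using jbr_lat_powr_le[OF \<epsilon>] \<open>0 \<le> D\<close> by (rule mult_left_mono)
    finally show "lattice_weight (l - k) ^ N * norm (?K k l) \<le> D * lattice_weight k ^ nat \<lceil>N1\<rceil>" .
  qed
qed

lemma wmon_eq: "wmon \<epsilon> \<alpha> u k = (\<Prod>i\<in>UNIV. \<bar>lat \<epsilon> k $ i\<bar> ^ \<alpha> i) * norm (u k)"
  unfolding wmon_def by (simp only: norm_mult norm_of_real abs_prod power_abs)

lemma wmon_nonneg: "0 \<le> wmon \<epsilon> \<alpha> u k"
  unfolding wmon_def by simp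

lemma wmon_le_seminorm_s: "u \<in> s_space \<epsilon> \<Longrightarrow> wmon \<epsilon> \<alpha> u k \<le> seminorm_s \<epsilon> \<alpha> u"
  unfolding seminorm_s_def s_space_def by (rule cSUP_upper) auto

lemma seminorm_s_nonneg: "u \<in> s_space \<epsilon> \<Longrightarrow> 0 \<le> seminorm_s \<epsilon> \<alpha> u"
  using wmon_le_seminorm_s wmon_nonneg order_trans by blast

lemma seminorm_s_le: "(\<And>k. wmon \<epsilon> \<alpha> u k \<le> B) \<Longrightarrow> seminorm_s \<epsilon> \<alpha> u \<le> B"
  unfolding seminorm_s_def by (rule cSUP_least) auto

lemma s_space_diff:
  assumes "u \<in> s_space \<epsilon>" "v \<in> s_space \<epsilon>"
  shows "u - v \<in> s_space \<epsilon>"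
  unfolding s_space_def
proof (intro CollectI allI bdd_aboveI2)
  fix \<alpha> k
  have "norm (u k - v k) \<le> norm (u k) + norm (v k)"
    by (rule norm_triangle_ineq4)
  then have "wmon \<epsilon> \<alpha> (u - v) k \<le> wmon \<epsilon> \<alpha> u k + wmon \<epsilon> \<alpha> v k"
    unfolding wmon_eq by (simp add: distrib_left[symmetric] mult_left_mono prod_nonneg)
  then show "wmon \<epsilon> \<alpha> (u - v) k \<le> seminorm_s \<epsilon> \<alpha> u + seminorm_s \<epsilon> \<alpha> v"
    using wmon_le_seminorm_s[OF assms(1)] wmon_le_seminorm_s[OF assms(2)] by (smt (verit))
qed

lemma wmon_le_lattice_weight:
  assumes "0 < \<epsilon>" "\<epsilon> \<le> 1"
  shows "wmon \<epsilon> \<alpha> u k \<le> lattice_weight k ^ (\<Sum>i\<in>UNIV. \<alpha> i) * norm (u k)"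
proof -
  have "\<bar>lat \<epsilon> k $ i\<bar> \<le> lattice_weight k" for i
  proof -
    have "\<bar>real_of_int (k $ i)\<bar> \<le> (\<Prod>j\<in>{i}. 1 + \<bar>real_of_int (k $ j)\<bar>)"
      by simp
    also have "\<dots> \<le> lattice_weight k"
      unfolding lattice_weight_def by (rule prod_mono2) auto
    finally show ?thesis
      using abs_lat_le[OF assms] order_trans by blast
  qed
  then have "(\<Prod>i\<in>UNIV. \<bar>lat \<epsilon> k $ i\<bar> ^ \<alpha> i) \<le> (\<Prod>i\<in>UNIV. lattice_weight k ^ \<alpha> i)"
    by (intro prod_mono) (simp add: power_mono)
  then show ?thesis
    unfolding wmon_eq power_sum by (rule mult_right_mono) simp
qed

definition pure_power :: "'n \<Rightarrow> nat \<Rightarrow> 'n \<Rightarrow> nat" where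
  "pure_power i M = (\<lambda>j. if j = i then M else 0)"

definition pure_power_indices :: "nat \<Rightarrow> ('n::finite \<Rightarrow> nat) set" where
  "pure_power_indices M = insert (\<lambda>_. 0) (range (\<lambda>i. pure_power i M))"

lemma finite_pure_power_indices: "finite (pure_power_indices M)"
  unfolding pure_power_indices_def by simp

lemma sum_pure_power_indices:
  assumes "0 < M"
  shows "(\<Sum>\<beta>\<in>pure_power_indices M. f \<beta>) = f (\<lambda>_. 0) + (\<Sum>i\<in>UNIV. f (pure_power i M))"
proof -
  have inj: "inj (\<lambda>i. pure_power i M)"
    using assms by (auto simp: inj_def pure_power_def fun_eq_iff split: if_splits)
  have "pure_power i M i \<noteq> 0" for i :: 'n
    using assms by (simp add: pure_power_def)
  then have "(\<lambda>_. 0) \<notin> range (\<lambda>i. pure_power i M)"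
    by (metis rangeE)
  then have "(\<Sum>\<beta>\<in>pure_power_indices M. f \<beta>) = f (\<lambda>_. 0) + (\<Sum>\<beta>\<in>range (\<lambda>i. pure_power i M). f \<beta>)"
    unfolding pure_power_indices_def by (intro sum.insert) auto
  also have "(\<Sum>\<beta>\<in>range (\<lambda>i. pure_power i M). f \<beta>) = (\<Sum>i\<in>UNIV. f (pure_power i M))"
    using sum.reindex[OF inj, of f] by (simp add: o_def)
  finally show ?thesis .
qed

lemma wmon_pure_power: "wmon \<epsilon> (pure_power i M) u l = \<bar>lat \<epsilon> l $ i\<bar> ^ M * norm (u l)"
proof -
  have "(\<Prod>j\<in>UNIV. \<bar>lat \<epsilon> l $ j\<bar> ^ pure_power i M j) = (\<Prod>j\<in>UNIV. if j = i then \<bar>lat \<epsilon> l $ j\<bar> ^ M else 1)"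
    by (rule prod.cong) (auto simp: pure_power_def)
  then show ?thesis
    unfolding wmon_eq by simp
qed

lemma lattice_weight_power_norm_le:
  fixes l :: "int^'n"
  assumes v: "v \<in> s_space \<epsilon>" and \<epsilon>: "0 < \<epsilon>" "\<epsilon> \<le> 1" and N: "0 < N"
  shows "lattice_weight l ^ N * norm (v l)
    \<le> (2 / \<epsilon>) ^ (N * CARD('n)) * (\<Sum>\<beta>\<in>pure_power_indices (N * CARD('n)). seminorm_s \<epsilon> \<beta> v)"
proof -
  define M where "M = N * CARD('n)"
  have M: "0 < M"
    using N unfolding M_def by simp
  have one: "1 \<le> (1 / \<epsilon>) ^ M"
    using \<epsilon> by simp
  have zero: "norm (v l) \<le> (1 / \<epsilon>) ^ M * seminorm_s \<epsilon> (\<lambda>_. 0) v"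
    using wmon_le_seminorm_s[OF v, of "\<lambda>_. 0" l] seminorm_s_nonneg[OF v] one
    by (simp add: wmon_eq) (smt (verit) mult_le_cancel_right1)
  have coord: "\<bar>real_of_int (l $ i)\<bar> ^ M * norm (v l) \<le> (1 / \<epsilon>) ^ M * seminorm_s \<epsilon> (pure_power i M) v"
    for i
  proof -
    have "\<bar>real_of_int (l $ i)\<bar> ^ M * norm (v l) = (1 / \<epsilon>) ^ M * (\<bar>lat \<epsilon> l $ i\<bar> ^ M * norm (v l))"
      using \<epsilon> by (simp add: lat_def abs_mult power_mult_distrib power_divide)
    also have "\<dots> \<le> (1 / \<epsilon>) ^ M * seminorm_s \<epsilon> (pure_power i M) v"
      using wmon_le_seminorm_s[OF v] \<epsilon> by (intro mult_left_mono) (auto simp: wmon_pure_power[symmetric])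
    finally show ?thesis .
  qed
  have "lattice_weight l ^ N * norm (v l)
      \<le> 2 ^ M * (1 + (\<Sum>i\<in>UNIV. \<bar>real_of_int (l $ i)\<bar> ^ M)) * norm (v l)"
    unfolding M_def by (intro mult_right_mono lattice_weight_power_le) simp
  also have "\<dots> = 2 ^ M * (norm (v l) + (\<Sum>i\<in>UNIV. \<bar>real_of_int (l $ i)\<bar> ^ M * norm (v l)))"
    by (simp add: distrib_right sum_distrib_right)
  also have "\<dots> \<le> 2 ^ M * ((1 / \<epsilon>) ^ M * seminorm_s \<epsilon> (\<lambda>_. 0) v
      + (\<Sum>i\<in>UNIV. (1 / \<epsilon>) ^ M * seminorm_s \<epsilon> (pure_power i M) v))"
    using zero coord by (intro mult_left_mono add_mono sum_mono) auto
  also have "\<dots> = (2 / \<epsilon>) ^ M * (\<Sum>\<beta>\<in>pure_power_indices M. seminorm_s \<epsilon> \<beta> v)"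
    by (simp add: sum_pure_power_indices[OF M] sum_divide_distrib[symmetric] distrib_left power_divide)
  finally show ?thesis
    unfolding M_def .
qed

text \<open>Peetre's inequality for the weight moves it from the row to the column index.\<close>

lemma off_diagonal_decay_transfer:
  assumes "off_diagonal_decay K P"
  obtains C where "0 \<le> C" "\<And>k l. lattice_weight k ^ A * norm (K k l) \<le> C * lattice_weight l ^ (A + P)"
proof -
  define N where "N = A + P"
  obtain C where C: "0 \<le> C" "\<And>k l. lattice_weight (l - k) ^ N * norm (K k l) \<le> C * lattice_weight k ^ P"
    using assms unfolding off_diagonal_decay_def by blast
  have "lattice_weight k ^ A * norm (K k l) \<le> C * lattice_weight l ^ N" for k l
  proof -
    have "lattice_weight k = lattice_weight ((k - l) + l)"
      by simp
    also have "\<dots> \<le> lattice_weight (l - k) * lattice_weight l"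
      using lattice_weight_add_le[of "k - l" l] lattice_weight_uminus[of "l - k"] by simp
    finally have "lattice_weight k ^ N \<le> lattice_weight (l - k) ^ N * lattice_weight l ^ N"
      using lattice_weight_ge_1[of k] by (metis power_mono power_mult_distrib zero_le_one order_trans)
    have "lattice_weight (l - k) ^ N * (lattice_weight k ^ A * norm (K k l))
        = lattice_weight k ^ A * (lattice_weight (l - k) ^ N * norm (K k l))"
      by (simp add: algebra_simps)
    also have "\<dots> \<le> lattice_weight k ^ A * (C * lattice_weight k ^ P)"
      using C(2) lattice_weight_pos by (intro mult_left_mono) (auto simp: less_imp_le)
    also have "\<dots> = C * lattice_weight k ^ N"
      unfolding N_def by (simp add: power_add algebra_simps)
    also have "\<dots> \<le> C * (lattice_weight (l - k) ^ N * lattice_weight l ^ N)"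
      using \<open>lattice_weight k ^ N \<le> _\<close> C(1) by (rule mult_left_mono)
    also have "\<dots> = lattice_weight (l - k) ^ N * (C * lattice_weight l ^ N)"
      by (simp add: algebra_simps)
    finally show ?thesis
      using lattice_weight_pos[of "l - k"] by (simp add: mult_le_cancel_left_pos)
  qed
  then show ?thesis
    using C(1) that unfolding N_def by blast
qed

lemma kernel_op_term_le:
  fixes K :: "int^'n \<Rightarrow> int^'n \<Rightarrow> complex"
  assumes decay: "off_diagonal_decay K P" and \<epsilon>: "0 < \<epsilon>" "\<epsilon> \<le> 1"
  obtains C and G :: "('n \<Rightarrow> nat) set" where "0 \<le> C" "finite G"
    "\<And>v k l. v \<in> s_space \<epsilon> \<Longrightarrow>
       lattice_weight k ^ A * norm (K k l * v l) \<le> C * (\<Sum>\<beta>\<in>G. seminorm_s \<epsilon> \<beta> v) / lattice_weight l ^ 2"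
proof -
  define N where "N = A + P + 2"
  obtain C where C: "0 \<le> C" "\<And>k l. lattice_weight k ^ A * norm (K k l) \<le> C * lattice_weight l ^ (A + P)"
    using off_diagonal_decay_transfer[OF decay] by blast
  define G :: "('n \<Rightarrow> nat) set" where "G = pure_power_indices (N * CARD('n))"
  define C' where "C' = C * (2 / \<epsilon>) ^ (N * CARD('n))"
  have "lattice_weight k ^ A * norm (K k l * v l) \<le> C' * (\<Sum>\<beta>\<in>G. seminorm_s \<epsilon> \<beta> v) / lattice_weight l ^ 2"
    if v: "v \<in> s_space \<epsilon>" for v k l
  proof -
    have "lattice_weight k ^ A * norm (K k l * v l) \<le> C * lattice_weight l ^ (A + P) * norm (v l)"
      using C(2) by (simp add: norm_mult mult.assoc[symmetric] mult_right_mono)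
    also have "\<dots> = C * (lattice_weight l ^ N * norm (v l)) / lattice_weight l ^ 2"
      using lattice_weight_pos[of l] by (simp add: N_def power_add power2_eq_square field_simps)
    also have "\<dots> \<le> C * ((2 / \<epsilon>) ^ (N * CARD('n)) * (\<Sum>\<beta>\<in>G. seminorm_s \<epsilon> \<beta> v)) / lattice_weight l ^ 2"
      unfolding G_def using lattice_weight_power_norm_le[OF v \<epsilon>, of N l] C(1)
      by (intro divide_right_mono mult_left_mono) (auto simp: N_def)
    finally show ?thesis
      by (simp add: C'_def mult.assoc)
  qed
  moreover have "0 \<le> C'"
    unfolding C'_def using C(1) \<epsilon> by simp
  ultimately show ?thesis
    using that finite_pure_power_indices unfolding G_def by blast
qed

lemma kernel_op_abs_summable:
  assumes "off_diagonal_decay K P" "0 < \<epsilon>" "\<epsilon> \<le> 1" "v \<in> s_space \<epsilon>"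
  shows "(\<lambda>l. norm (K k l * v l)) summable_on UNIV"
proof -
  obtain C G where C: "\<And>l. norm (K k l * v l) \<le> C * (\<Sum>\<beta>\<in>G. seminorm_s \<epsilon> \<beta> v) / lattice_weight l ^ 2"
    using kernel_op_term_le[OF assms(1-3), where A = 0] assms(4) by (metis mult_1 power_0)
  have "(\<lambda>l. C * (\<Sum>\<beta>\<in>G. seminorm_s \<epsilon> \<beta> v) * (1 / lattice_weight l ^ 2)) summable_on UNIV"
    by (rule summable_on_cmult_right[OF summable_on_lattice_weight_inverse_square])
  then show ?thesis
    by (rule Infinite_Sum.abs_summable_on_comparison_test') (use C in simp)
qed

lemma kernel_op_diff:
  assumes "off_diagonal_decay K P" "0 < \<epsilon>" "\<epsilon> \<le> 1" "u \<in> s_space \<epsilon>" "v \<in> s_space \<epsilon>"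
  shows "kernel_op K (u - v) = kernel_op K u - kernel_op K v"
proof
  fix k
  have "(\<lambda>l. K k l * u l) summable_on UNIV" "(\<lambda>l. - (K k l * v l)) summable_on UNIV"
    using kernel_op_abs_summable[OF assms(1-3)] assms(4,5)
    by (auto intro: abs_summable_summable summable_on_uminus)
  from infsum_add[OF this] show "kernel_op K (u - v) k = (kernel_op K u - kernel_op K v) k"
    by (simp add: kernel_op_def algebra_simps infsum_uminus)
qed

lemma kernel_op_wmon_le:
  fixes K :: "int^'n \<Rightarrow> int^'n \<Rightarrow> complex"
  assumes decay: "off_diagonal_decay K P" and \<epsilon>: "0 < \<epsilon>" "\<epsilon> \<le> 1"
  shows "\<exists>G C. finite G \<and> 0 \<le> C \<and>
    (\<forall>v\<in>s_space \<epsilon>. \<forall>k. wmon \<epsilon> \<alpha> (kernel_op K v) k \<le> C * (\<Sum>\<beta>\<in>G. seminorm_s \<epsilon> \<beta> v))"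
proof -
  define A where "A = (\<Sum>i\<in>UNIV. \<alpha> i)"
  obtain C G where C: "0 \<le> C" "finite G"
    "\<And>v k l. v \<in> s_space \<epsilon> \<Longrightarrow>
       lattice_weight k ^ A * norm (K k l * v l) \<le> C * (\<Sum>\<beta>\<in>G. seminorm_s \<epsilon> \<beta> v) / lattice_weight l ^ 2"
    using kernel_op_term_le[OF decay \<epsilon>] by blast
  define Z where "Z = (\<Sum>\<^sub>\<infinity>l::int^'n. 1 / lattice_weight l ^ 2)"
  have "wmon \<epsilon> \<alpha> (kernel_op K v) k \<le> C * Z * (\<Sum>\<beta>\<in>G. seminorm_s \<epsilon> \<beta> v)"
    if v: "v \<in> s_space \<epsilon>" for v k
  proof -
    let ?S = "\<Sum>\<beta>\<in>G. seminorm_s \<epsilon> \<beta> v"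
    have summable: "(\<lambda>l. norm (K k l * v l)) summable_on UNIV"
      by (rule kernel_op_abs_summable[OF decay \<epsilon> v])
    have "wmon \<epsilon> \<alpha> (kernel_op K v) k \<le> lattice_weight k ^ A * norm (kernel_op K v k)"
      unfolding A_def by (rule wmon_le_lattice_weight[OF \<epsilon>])
    also have "\<dots> \<le> lattice_weight k ^ A * (\<Sum>\<^sub>\<infinity>l. norm (K k l * v l))"
      unfolding kernel_op_def using norm_infsum_bound[OF summable] lattice_weight_pos
      by (intro mult_left_mono) (auto simp: less_imp_le)
    also have "\<dots> = (\<Sum>\<^sub>\<infinity>l. lattice_weight k ^ A * norm (K k l * v l))"
      by (rule infsum_cmult_right'[symmetric])
    also have "\<dots> \<le> (\<Sum>\<^sub>\<infinity>l::int^'n. C * ?S * (1 / lattice_weight l ^ 2))"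
    proof (rule Infinite_Sum.infsum_mono)
      show "(\<lambda>l. lattice_weight k ^ A * norm (K k l * v l)) summable_on UNIV"
        by (rule summable_on_cmult_right[OF summable])
      show "(\<lambda>l::int^'n. C * ?S * (1 / lattice_weight l ^ 2)) summable_on UNIV"
        by (rule summable_on_cmult_right[OF summable_on_lattice_weight_inverse_square])
      show "lattice_weight k ^ A * norm (K k l * v l) \<le> C * ?S * (1 / lattice_weight l ^ 2)" for l
        using C(3)[OF v, of k l] by simp
    qed
    also have "\<dots> = C * Z * ?S"
      unfolding Z_def infsum_cmult_right' by (simp add: mult_ac)
    finally show ?thesis .
  qed
  moreover have "0 \<le> C * Z"
    unfolding Z_def using C(1) by (intro mult_nonneg_nonneg infsum_nonneg) auto
  ultimately show ?thesis
    using C(2) by (intro exI[of _ G] exI[of _ "C * Z"]) auto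
qed

definition s_nbhd :: "real \<Rightarrow> ('n \<Rightarrow> nat) set \<Rightarrow> real \<Rightarrow> (int^'n \<Rightarrow> complex) \<Rightarrow> (int^'n \<Rightarrow> complex) set" where
  "s_nbhd \<epsilon> F r u = {v \<in> s_space \<epsilon>. \<forall>\<alpha>\<in>F. seminorm_s \<epsilon> \<alpha> (v - u) < r}"

definition s_open :: "real \<Rightarrow> (int^'n \<Rightarrow> complex) set \<Rightarrow> bool" where
  "s_open \<epsilon> U \<longleftrightarrow> U \<subseteq> s_space \<epsilon> \<and> (\<forall>u\<in>U. \<exists>F r. finite F \<and> 0 < r \<and> s_nbhd \<epsilon> F r u \<subseteq> U)"

lemma istopology_s_open: "istopology (s_open \<epsilon> :: (int^'n \<Rightarrow> complex) set \<Rightarrow> bool)"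
  unfolding istopology_def
proof (intro conjI allI impI)
  fix S T :: "(int^'n \<Rightarrow> complex) set"
  assume "s_open \<epsilon> S" "s_open \<epsilon> T"
  show "s_open \<epsilon> (S \<inter> T)"
    unfolding s_open_def
  proof (intro conjI ballI)
    show "S \<inter> T \<subseteq> s_space \<epsilon>"
      using \<open>s_open \<epsilon> S\<close> unfolding s_open_def by blast
    fix u assume u: "u \<in> S \<inter> T"
    obtain F1 r1 where 1: "finite F1" "0 < r1" "s_nbhd \<epsilon> F1 r1 u \<subseteq> S"
      using \<open>s_open \<epsilon> S\<close> u unfolding s_open_def by blast
    obtain F2 r2 where 2: "finite F2" "0 < r2" "s_nbhd \<epsilon> F2 r2 u \<subseteq> T"
      using \<open>s_open \<epsilon> T\<close> u unfolding s_open_def by blast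
    have "s_nbhd \<epsilon> (F1 \<union> F2) (min r1 r2) u \<subseteq> s_nbhd \<epsilon> F1 r1 u \<inter> s_nbhd \<epsilon> F2 r2 u"
      unfolding s_nbhd_def by auto
    then show "\<exists>F r. finite F \<and> 0 < r \<and> s_nbhd \<epsilon> F r u \<subseteq> S \<inter> T"
      using 1 2 by (intro exI[of _ "F1 \<union> F2"] exI[of _ "min r1 r2"]) auto
  qed
next
  fix \<K> :: "(int^'n \<Rightarrow> complex) set set"
  assume \<K>: "\<forall>S\<in>\<K>. s_open \<epsilon> S"
  show "s_open \<epsilon> (\<Union>\<K>)"
    unfolding s_open_def
  proof (intro conjI ballI)
    show "\<Union>\<K> \<subseteq> s_space \<epsilon>"
      using \<K> unfolding s_open_def by blast
    fix u assume "u \<in> \<Union>\<K>"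
    then obtain S where S: "S \<in> \<K>" "u \<in> S"
      by blast
    then obtain F r where "finite F" "0 < r" "s_nbhd \<epsilon> F r u \<subseteq> S"
      using \<K> unfolding s_open_def by blast
    then show "\<exists>F r. finite F \<and> 0 < r \<and> s_nbhd \<epsilon> F r u \<subseteq> \<Union>\<K>"
      using S(1) by blast
  qed
qed

lemma openin_s_topology: "openin (s_topology \<epsilon>) = (s_open \<epsilon> :: (int^'n \<Rightarrow> complex) set \<Rightarrow> bool)"
proof -
  have "s_topology \<epsilon> = topology (s_open \<epsilon> :: (int^'n \<Rightarrow> complex) set \<Rightarrow> bool)"
    unfolding s_topology_def s_open_def[abs_def] s_nbhd_def by (rule refl)
  then show ?thesis
    using topology_inverse'[OF istopology_s_open] by simp
qed

lemma topspace_s_topology: "topspace (s_topology \<epsilon>) = (s_space \<epsilon> :: (int^'n \<Rightarrow> complex) set)"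
proof
  have "openin (s_topology \<epsilon>) (s_space \<epsilon>)"
    unfolding openin_s_topology s_open_def s_nbhd_def by (intro conjI ballI exI[of _ "{}"] exI[of _ 1]) auto
  then show "s_space \<epsilon> \<subseteq> topspace (s_topology \<epsilon>)"
    by (rule openin_subset)
  show "topspace (s_topology \<epsilon>) \<subseteq> s_space \<epsilon>"
    using openin_topspace[of "s_topology \<epsilon>"] unfolding openin_s_topology s_open_def by (rule conjunct1)
qed

lemma image_s_nbhd_subset:
  assumes diff: "\<And>u v. u \<in> s_space \<epsilon> \<Longrightarrow> v \<in> s_space \<epsilon> \<Longrightarrow> T (u - v) = T u - T v"
    and maps: "\<And>v. v \<in> s_space \<epsilon> \<Longrightarrow> T v \<in> s_space \<epsilon>"
    and bound: "\<And>\<alpha> v. v \<in> s_space \<epsilon> \<Longrightarrow> seminorm_s \<epsilon> \<alpha> (T v) \<le> C \<alpha> * (\<Sum>\<beta>\<in>G \<alpha>. seminorm_s \<epsilon> \<beta> v)"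
    and C: "\<And>\<alpha>. 0 \<le> C \<alpha>" and v0: "v0 \<in> s_space \<epsilon>" and F: "finite F" and r: "0 < r"
  shows "\<exists>r'>0. T ` s_nbhd \<epsilon> (\<Union>(G ` F)) r' v0 \<subseteq> s_nbhd \<epsilon> F r (T v0)"
proof -
  define S where "S = (\<Sum>\<alpha>\<in>F. C \<alpha> * card (G \<alpha>))"
  have S: "0 \<le> S"
    unfolding S_def using C by (simp add: sum_nonneg)
  define r' where "r' = r / (1 + S)"
  have r': "0 < r'" "S * r' < r"
    unfolding r'_def using r S by (simp_all add: field_simps)
  have "T w \<in> s_nbhd \<epsilon> F r (T v0)" if w: "w \<in> s_nbhd \<epsilon> (\<Union>(G ` F)) r' v0" for w
  proof -
    have ws: "w \<in> s_space \<epsilon>" and small: "\<And>\<beta> \<alpha>. \<alpha> \<in> F \<Longrightarrow> \<beta> \<in> G \<alpha> \<Longrightarrow> seminorm_s \<epsilon> \<beta> (w - v0) < r'"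
      using w unfolding s_nbhd_def by auto
    have "seminorm_s \<epsilon> \<alpha> (T w - T v0) < r" if \<alpha>: "\<alpha> \<in> F" for \<alpha>
    proof -
      have "seminorm_s \<epsilon> \<alpha> (T w - T v0) \<le> C \<alpha> * (\<Sum>\<beta>\<in>G \<alpha>. seminorm_s \<epsilon> \<beta> (w - v0))"
        using diff[OF ws v0] bound[OF s_space_diff[OF ws v0]] by simp
      also have "\<dots> \<le> C \<alpha> * (card (G \<alpha>) * r')"
        using sum_mono[of "G \<alpha>" "\<lambda>\<beta>. seminorm_s \<epsilon> \<beta> (w - v0)" "\<lambda>_. r'"] small[OF \<alpha>] C
        by (intro mult_left_mono) (auto intro: less_imp_le)
      also have "\<dots> \<le> S * r'"
        unfolding S_def mult.assoc[symmetric] using \<alpha> F C r'(1)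
        by (intro mult_right_mono member_le_sum) auto
      finally show ?thesis
        using r'(2) by linarith
    qed
    then show ?thesis
      using maps[OF ws] unfolding s_nbhd_def by blast
  qed
  then show ?thesis
    using r'(1) by blast
qed

lemma continuous_map_s_topology:
  assumes diff: "\<And>u v. u \<in> s_space \<epsilon> \<Longrightarrow> v \<in> s_space \<epsilon> \<Longrightarrow> T (u - v) = T u - T v"
    and bound: "\<And>\<alpha>. \<exists>G C. finite G \<and> 0 \<le> C \<and>
      (\<forall>v\<in>s_space \<epsilon>. \<forall>k. wmon \<epsilon> \<alpha> (T v) k \<le> C * (\<Sum>\<beta>\<in>G. seminorm_s \<epsilon> \<beta> v))"
  shows "continuous_map (s_topology \<epsilon>) (s_topology \<epsilon>) T"
proof -
  obtain G C where GC: "\<And>\<alpha>. finite (G \<alpha>)" "\<And>\<alpha>. 0 \<le> C \<alpha>"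
    "\<And>\<alpha> v k. v \<in> s_space \<epsilon> \<Longrightarrow> wmon \<epsilon> \<alpha> (T v) k \<le> C \<alpha> * (\<Sum>\<beta>\<in>G \<alpha>. seminorm_s \<epsilon> \<beta> v)"
    using bound by metis
  have maps: "T v \<in> s_space \<epsilon>" if "v \<in> s_space \<epsilon>" for v
    unfolding s_space_def
  proof (intro CollectI allI bdd_aboveI2)
    show "wmon \<epsilon> \<alpha> (T v) k \<le> C \<alpha> * (\<Sum>\<beta>\<in>G \<alpha>. seminorm_s \<epsilon> \<beta> v)" for \<alpha> k
      by (rule GC(3)[OF that])
  qed
  have "openin (s_topology \<epsilon>) {v \<in> s_space \<epsilon>. T v \<in> U}" if U: "openin (s_topology \<epsilon>) U" for U
    unfolding openin_s_topology s_open_def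
  proof (intro conjI ballI)
    fix v0 assume v0: "v0 \<in> {v \<in> s_space \<epsilon>. T v \<in> U}"
    obtain F r where F: "finite F" "0 < r" "s_nbhd \<epsilon> F r (T v0) \<subseteq> U"
      using U v0 unfolding openin_s_topology s_open_def by blast
    obtain r' where "0 < r'" "T ` s_nbhd \<epsilon> (\<Union>(G ` F)) r' v0 \<subseteq> s_nbhd \<epsilon> F r (T v0)"
      using image_s_nbhd_subset[OF diff maps seminorm_s_le[OF GC(3)] GC(2) _ F(1,2)] v0 by blast
    then show "\<exists>F r. finite F \<and> 0 < r \<and> s_nbhd \<epsilon> F r v0 \<subseteq> {v \<in> s_space \<epsilon>. T v \<in> U}"
      using F(1,3) GC(1) unfolding s_nbhd_def by (intro exI[of _ "\<Union>(G ` F)"] exI[of _ r']) auto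
  qed auto
  then show ?thesis
    unfolding continuous_map_def topspace_s_topology using maps by blast
qed

theorem lemmaA2:
  fixes \<delta> \<epsilon> :: real
    and m :: "real^'n \<Rightarrow> real^'n \<Rightarrow> real"
    and a :: "real^'n \<Rightarrow> real^'n \<Rightarrow> real \<Rightarrow> complex"
  assumes "0 \<le> \<delta>" "\<delta> \<le> 1"
    and "order_function m"
    and "symbol_class 0 \<delta> m a"
    and "0 < \<epsilon>" "\<epsilon> \<le> 1"
  shows "continuous_map (s_topology \<epsilon>) (s_topology \<epsilon>) (OpT \<epsilon> a)"
proof -
  obtain C0 N1 where order: "\<forall>x y \<xi> \<eta>. m x \<xi> \<le> C0 * jbr (x - y) powr N1 * m y \<eta>"
    using assms(3) unfolding order_function_def by blast
  have m: "\<forall>x \<xi>. 0 \<le> m x \<xi>"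
    using assms(3) unfolding order_function_def by blast
  have \<epsilon>: "0 < \<epsilon>" "\<epsilon> \<le> 1"
    using assms(5,6) .
  have decay: "off_diagonal_decay (lattice_kernel \<epsilon> a) (nat \<lceil>N1\<rceil>)"
    by (rule lattice_kernel_off_diagonal_decay[OF order m assms(4) \<epsilon>])
  show ?thesis
    unfolding OpT_eq_kernel_op
    using kernel_op_diff[OF decay \<epsilon>] kernel_op_wmon_le[OF decay \<epsilon>]
    by (rule continuous_map_s_topology)
qed

end
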